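(* Let $A\in\{\mathbb Z,\mathbb R\}$ and let $X\subset\mathbb R^d$ be bounded. Then $\mathrm{Flt}_d^A(X)=\sup\{\mathrm{width}(K): K\subset\mathbb R^d \text{ is an } A\text{-}X\text{-free convex body}\}$.
   Context: A convex body in $\mathbb R^d$ is a nonempty compact convex subset of $\mathbb R^d$. An $A$-unimodular transformation is a map $T:\mathbb R^d\to\mathbb R^d$, $T(x)=Mx+b$ with $M\in \mathrm{GL}_d(\mathbb Z)$ and $b\in A^d$; an $A$-unimodular copy of $X\subset\mathbb R^d$ is a set $T(X)$ for such a $T$. For $u\in(\mathbb Z^d)^*$ (extended linearly to $\mathbb R^d$), $\mathrm{width}_u(K)=\sup_{x,y\in K}|u(x)-u(y)|$ and $\mathrm{width}(K)=\inf_{u\in(\mathbb Z^d)^*\setminus\{0\}}\mathrm{width}_u(K)$. $\mathrm{Flt}_d^A(X)=\sup\{\mathrm{width}(K): K\subset\mathbb R^d \text{ a convex body containing no } A\text{-unimodular copy of } X\}$. A convex set $K$ is $A$-$X$-free if its relative interior contains no $A$-unimodular copy of $X$ (the relative interior of a single point is that point). *)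

theory Defs
  imports "HOL-Analysis.Analysis"
begin

definition GLZ :: "(real^'n^'n) set" where
  "GLZ = {M. (\<forall>i j. M $ i $ j \<in> \<int>) \<and> (det M = 1 \<or> det M = -1)}"

definition unimodular_copies :: "real set \<Rightarrow> (real^'n) set \<Rightarrow> (real^'n) set set" where
  "unimodular_copies A X =
     {(\<lambda>x. M *v x + b) ` X | M b. M \<in> GLZ \<and> (\<forall>i. b $ i \<in> A)}"

definition convex_body :: "(real^'n) set \<Rightarrow> bool" where
  "convex_body K \<longleftrightarrow> K \<noteq> {} \<and> compact K \<and> convex K"

text \<open>Integer linear functionals u in (Z^d)^*, represented by integer vectors u, u(x) = u \<bullet> x.\<close>
definition width_dir :: "real^'n \<Rightarrow> (real^'n) set \<Rightarrow> ereal" where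
  "width_dir u K = (SUP p\<in>K \<times> K. ereal \<bar>u \<bullet> fst p - u \<bullet> snd p\<bar>)"

definition lattice_width :: "(real^'n) set \<Rightarrow> ereal" where
  "lattice_width K = (INF u\<in>{u::real^'n. (\<forall>i. u $ i \<in> \<int>) \<and> u \<noteq> 0}. width_dir u K)"

definition Flt :: "real set \<Rightarrow> (real^'n) set \<Rightarrow> ereal" where
  "Flt A X = (SUP K\<in>{K. convex_body K \<and> (\<forall>Y\<in>unimodular_copies A X. \<not> Y \<subseteq> K)}.
                 lattice_width K)"

definition X_free :: "real set \<Rightarrow> (real^'n) set \<Rightarrow> (real^'n) set \<Rightarrow> bool" where
  "X_free A X K \<longleftrightarrow> convex K \<and> (\<forall>Y\<in>unimodular_copies A X. \<not> Y \<subseteq> rel_interior K)"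

end

theory Submission
  imports Defs
begin

text \<open>Every A-X-free convex body K is a limit of convex bodies containing no A-unimodular copy of X
  at all: for c in the relative interior of K and 0 < t < 1, the homothetic copy c + t (K - c) lies
  in the relative interior of K, and its lattice width is t times that of K. Conversely, a convex
  body containing no copy of X is in particular X-free, so both suprema agree.\<close>

lemma width_dir_nonneg:
  assumes "K \<noteq> {}"
  shows "0 \<le> width_dir u K"
proof -
  obtain x where "x \<in> K" using assms by blast
  hence "ereal \<bar>u \<bullet> fst (x, x) - u \<bullet> snd (x, x)\<bar> \<le> width_dir u K"
    unfolding width_dir_def by (intro SUP_upper) auto
  thus ?thesis by (simp add: zero_ereal_def)
qed

lemma lattice_width_nonneg:
  assumes "K \<noteq> {}"
  shows "0 \<le> lattice_width K"
  unfolding lattice_width_def using width_dir_nonneg[OF assms] by (auto intro: INF_greatest)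

lemma width_dir_homothety:
  fixes t :: real
  assumes "0 \<le> t" "K \<noteq> {}"
  shows "width_dir u ((\<lambda>x. c + t *\<^sub>R (x - c)) ` K) = ereal t * width_dir u K"
proof -
  let ?h = "\<lambda>x. c + t *\<^sub>R (x - c)"
  have pairs: "?h ` K \<times> ?h ` K = (\<lambda>p. (?h (fst p), ?h (snd p))) ` (K \<times> K)"
    by force
  have "\<bar>u \<bullet> ?h x - u \<bullet> ?h y\<bar> = t * \<bar>u \<bullet> x - u \<bullet> y\<bar>" for x y
  proof -
    have "u \<bullet> ?h x - u \<bullet> ?h y = t * (u \<bullet> x - u \<bullet> y)"
      by (simp add: inner_diff_right algebra_simps)
    thus ?thesis using assms(1) by (simp add: abs_mult)
  qed
  hence "width_dir u (?h ` K) = (SUP p\<in>K \<times> K. ereal t * ereal \<bar>u \<bullet> fst p - u \<bullet> snd p\<bar>)"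
    unfolding width_dir_def pairs image_image by simp
  also have "\<dots> = ereal t * width_dir u K"
    unfolding width_dir_def by (rule SUP_ereal_mult_left) (use assms in auto)
  finally show ?thesis .
qed

lemma lattice_width_homothety_ge:
  fixes t :: real and K :: "(real^'n) set"
  assumes "0 \<le> t" "K \<noteq> {}"
  shows "ereal t * lattice_width K \<le> lattice_width ((\<lambda>x. c + t *\<^sub>R (x - c)) ` K)"
  unfolding lattice_width_def
proof (rule INF_greatest)
  fix u :: "real^'n"
  assume "u \<in> {u. (\<forall>i. u $ i \<in> \<int>) \<and> u \<noteq> 0}"
  hence "ereal t * (INF v\<in>{v::real^'n. (\<forall>i. v $ i \<in> \<int>) \<and> v \<noteq> 0}. width_dir v K)
          \<le> ereal t * width_dir u K"
    using assms(1) by (intro ereal_mult_left_mono INF_lower) auto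
  thus "ereal t * (INF v\<in>{v::real^'n. (\<forall>i. v $ i \<in> \<int>) \<and> v \<noteq> 0}. width_dir v K)
          \<le> width_dir u ((\<lambda>x. c + t *\<^sub>R (x - c)) ` K)"
    using width_dir_homothety[OF assms] by simp
qed

lemma convex_body_homothety:
  assumes "convex_body K"
  shows "convex_body ((\<lambda>x. c + t *\<^sub>R (x - c)) ` K)"
proof -
  have "(\<lambda>x. c + t *\<^sub>R (x - c)) = (\<lambda>x. (c - t *\<^sub>R c) + t *\<^sub>R x)"
    by (auto simp: algebra_simps)
  thus ?thesis using assms unfolding convex_body_def \<open>_ = _\<close>
    by (auto intro!: compact_continuous_image continuous_intros
        simp: image_image[symmetric] convex_translation convex_scaling)
qed

lemma homothety_subset_rel_interior:
  fixes K :: "'a::euclidean_space set"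
  assumes "convex K" "c \<in> rel_interior K" "0 < t" "t < 1"
  shows "(\<lambda>x. c + t *\<^sub>R (x - c)) ` K \<subseteq> rel_interior K"
proof
  fix y assume "y \<in> (\<lambda>x. c + t *\<^sub>R (x - c)) ` K"
  then obtain x where "x \<in> K" and y: "y = c + t *\<^sub>R (x - c)" by blast
  have "x - (1 - t) *\<^sub>R (x - c) \<in> rel_interior K"
    using rel_interior_convex_shrink[OF assms(1,2) \<open>x \<in> K\<close>] assms(3,4) by simp
  moreover have "x - (1 - t) *\<^sub>R (x - c) = y"
    unfolding y by (simp add: algebra_simps)
  ultimately show "y \<in> rel_interior K" by simp
qed

lemma Flt_le_SUP_X_free:
  "Flt A X \<le> (SUP K\<in>{K. convex_body K \<and> X_free A X K}. lattice_width K)"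
  unfolding Flt_def X_free_def convex_body_def
  by (rule SUP_subset_mono) (use rel_interior_subset in blast)+

lemma lattice_width_le_Flt_if_X_free:
  assumes K: "convex_body K" and free: "X_free A X K"
  shows "lattice_width K \<le> Flt A X"
proof -
  have "K \<noteq> {}" and "convex K"
    using K unfolding convex_body_def by auto
  then obtain c where c: "c \<in> rel_interior K"
    using rel_interior_eq_empty by blast
  have shrunk: "ereal t * lattice_width K \<le> Flt A X" if "0 < t" "t < 1" for t :: real
  proof -
    let ?K = "(\<lambda>x. c + t *\<^sub>R (x - c)) ` K"
    have "\<forall>Y\<in>unimodular_copies A X. \<not> Y \<subseteq> ?K"
      using free homothety_subset_rel_interior[OF \<open>convex K\<close> c that]
      unfolding X_free_def by blast
    hence "lattice_width ?K \<le> Flt A X"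
      unfolding Flt_def using convex_body_homothety[OF K] by (intro SUP_upper) auto
    thus ?thesis
      using lattice_width_homothety_ge[OF _ \<open>K \<noteq> {}\<close>, of t c] that by simp
  qed
  show ?thesis
  proof (rule ereal_le_mult_one_interval)
    have "0 \<le> ereal (1/2) * lattice_width K"
      using lattice_width_nonneg[OF \<open>K \<noteq> {}\<close>] by simp
    thus "Flt A X \<noteq> -\<infinity>"
      using shrunk[of "1/2"] by auto
  next
    fix z :: ereal
    assume "0 < z" "z < 1"
    then obtain t where "z = ereal t" "0 < t" "t < 1" by (cases z) auto
    thus "z * lattice_width K \<le> Flt A X" using shrunk by simp
  qed
qed

theorem lemma2p2:
  fixes A :: "real set" and X :: "(real^'n) set"
  assumes "A = \<int> \<or> A = UNIV"
    and "bounded X"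
  shows "Flt A X = (SUP K\<in>{K. convex_body K \<and> X_free A X K}. lattice_width K)"
proof (rule antisym)
  show "Flt A X \<le> (SUP K\<in>{K. convex_body K \<and> X_free A X K}. lattice_width K)"
    by (rule Flt_le_SUP_X_free)
  show "(SUP K\<in>{K. convex_body K \<and> X_free A X K}. lattice_width K) \<le> Flt A X"
    by (rule SUP_least) (auto intro: lattice_width_le_Flt_if_X_free)
qed

end
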